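(* Let $B$ be a commutative ring with identity and $A$ a subring of $B$ containing the identity such that for any two distinct maximal ideals $M, M'$ of $B$, $(M\cap A)+(M'\cap A)=A$. Then for any two distinct maximal ideals $M\neq M'$ of $B$, $M\cap A$ and $M'\cap A$ are non-comparable, and $A$ is a weak completely normal subring of $B$.
   Context: $\operatorname{spec} A$ is the set of prime ideals of $A$ with the Zariski topology. A subring $A$ of $B$ is a weak completely normal subring of $B$ if for any two distinct maximal ideals $M\neq M'$ of $B$ such that $M\cap A$ and $M'\cap A$ are non-comparable, $\operatorname{cl}_{\operatorname{spec} A}\{M\cap A\}\cap \operatorname{cl}_{\operatorname{spec} A}\{M'\cap A\}=\emptyset$. *)

theory Defs
  imports "HOL-Algebra.Algebra"
begin

definition Spec :: "('a, 'b) ring_scheme \<Rightarrow> 'a set set" where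
  "Spec R = {P. primeideal P R}"

definition zariski_closed :: "('a, 'b) ring_scheme \<Rightarrow> 'a set set \<Rightarrow> bool" where
  "zariski_closed R S \<longleftrightarrow> (\<exists>I. I \<subseteq> carrier R \<and> S = {P \<in> Spec R. I \<subseteq> P})"

definition zariski_closure :: "('a, 'b) ring_scheme \<Rightarrow> 'a set set \<Rightarrow> 'a set set" where
  "zariski_closure R T = \<Inter> {S. zariski_closed R S \<and> T \<subseteq> S}"

definition non_comparable :: "'a set \<Rightarrow> 'a set \<Rightarrow> bool" where
  "non_comparable P Q \<longleftrightarrow> \<not> P \<subseteq> Q \<and> \<not> Q \<subseteq> P"

definition weak_completely_normal_subring :: "'a set \<Rightarrow> ('a, 'b) ring_scheme \<Rightarrow> bool" where
  "weak_completely_normal_subring A B \<longleftrightarrow>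
     (\<forall>M M'. maximalideal M B \<and> maximalideal M' B \<and> M \<noteq> M' \<and> non_comparable (M \<inter> A) (M' \<inter> A)
        \<longrightarrow> zariski_closure (B\<lparr>carrier := A\<rparr>) {M \<inter> A} \<inter> zariski_closure (B\<lparr>carrier := A\<rparr>) {M' \<inter> A} = {})"

end

theory Submission
  imports Defs
begin

text \<open>Contracting the maximal ideals of B to A gives prime ideals of A, and for distinct M, M'
  the contractions are comaximal, so no proper ideal of A, in particular no prime of A, contains
  both. Taking that prime to be one of the two contractions gives non-comparability; taking it
  to be a common point of the closures V(M \<inter> A) and V(M' \<inter> A) gives disjointness.\<close>

lemma ideal_contains_comaximal_imp_carrier:
  assumes "ideal K R" and "I \<subseteq> K" and "J \<subseteq> K" and "I <+>\<^bsub>R\<^esub> J = carrier R"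
  shows "K = carrier R"
proof -
  have "I <+>\<^bsub>R\<^esub> J \<subseteq> K"
    using assms(2,3) additive_subgroup.a_closed[OF ideal.axioms(1)[OF assms(1)]]
    by (auto simp: set_add_def')
  then show ?thesis
    using assms(4) ideal.Icarr[OF assms(1)] by blast
qed

lemma (in cring) primeideal_inter_subring:
  assumes "subring A R" and "primeideal P R"
  shows "primeideal (P \<inter> A) (R\<lparr>carrier := A\<rparr>)"
proof -
  have A_sub: "A \<subseteq> carrier R"
    using subringE(1)[OF assms(1)] .
  have cring_A: "cring (R\<lparr>carrier := A\<rparr>)"
    using subcring_iff[OF A_sub] subcringI'[OF assms(1)] by simp
  have "id \<in> ring_hom (R\<lparr>carrier := A\<rparr>) R"
    by (rule ring_hom_memI) (use A_sub in auto)
  then have "ring_hom_ring (R\<lparr>carrier := A\<rparr>) R id"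
    using cring_A ring_axioms unfolding ring_hom_ring_def ring_hom_ring_axioms_def cring_def by simp
  from ring_hom_ring.primeideal_vimage[OF this cring_A assms(2)]
  show ?thesis
    by (simp add: Int_def conj_commute)
qed

lemma zariski_closure_singleton:
  assumes "P \<in> Spec R"
  shows "zariski_closure R {P} = {Q \<in> Spec R. P \<subseteq> Q}"
proof
  have "P \<subseteq> carrier R"
    using assms additive_subgroup.a_subset ideal.axioms(1) primeideal.axioms(1)
    unfolding Spec_def by blast
  then have "zariski_closed R {Q \<in> Spec R. P \<subseteq> Q}"
    unfolding zariski_closed_def by (intro exI[of _ P]) simp
  then show "zariski_closure R {P} \<subseteq> {Q \<in> Spec R. P \<subseteq> Q}"
    using assms unfolding zariski_closure_def by (intro Inter_lower) simp
next
  show "{Q \<in> Spec R. P \<subseteq> Q} \<subseteq> zariski_closure R {P}"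
    unfolding zariski_closure_def
  proof (intro subsetI InterI)
    fix Q S
    assume Q: "Q \<in> {Q \<in> Spec R. P \<subseteq> Q}" and "S \<in> {S. zariski_closed R S \<and> {P} \<subseteq> S}"
    then obtain I where "S = {Q \<in> Spec R. I \<subseteq> Q}" and "P \<in> S"
      unfolding zariski_closed_def by auto
    with Q show "Q \<in> S" by auto
  qed
qed

theorem lemma4p4:
  fixes B (structure) and A :: "'a set"
  assumes "cring B"
    and "subring A B"
    and "\<And>M M'. \<lbrakk>maximalideal M B; maximalideal M' B; M \<noteq> M'\<rbrakk> \<Longrightarrow>
           (M \<inter> A) <+>\<^bsub>B\<lparr>carrier := A\<rparr>\<^esub> (M' \<inter> A) = A"
  shows "(\<forall>M M'. maximalideal M B \<and> maximalideal M' B \<and> M \<noteq> M' \<longrightarrow> non_comparable (M \<inter> A) (M' \<inter> A))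
         \<and> weak_completely_normal_subring A B"
proof -
  interpret cring B by fact
  let ?A = "B\<lparr>carrier := A\<rparr>"
  have contraction_prime: "primeideal (M \<inter> A) ?A" if "maximalideal M B" for M
    using primeideal_inter_subring[OF assms(2) maximalideal_prime[OF that]] .
  have no_common_prime: False
    if "maximalideal M B" "maximalideal M' B" "M \<noteq> M'"
      and "primeideal P ?A" "M \<inter> A \<subseteq> P" "M' \<inter> A \<subseteq> P" for M M' P
  proof -
    have "P = A"
      using ideal_contains_comaximal_imp_carrier[OF primeideal.axioms(1)[OF that(4)] that(5,6)]
        assms(3)[OF that(1-3)]
      by simp
    then show False
      using primeideal.I_notcarr[OF that(4)] by simp
  qed
  have "non_comparable (M \<inter> A) (M' \<inter> A)"
    if "maximalideal M B" "maximalideal M' B" "M \<noteq> M'" for M M'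
    unfolding non_comparable_def
    using no_common_prime[OF that contraction_prime[OF that(1)]]
      no_common_prime[OF that contraction_prime[OF that(2)]] by blast
  moreover have "weak_completely_normal_subring A B"
    unfolding weak_completely_normal_subring_def
  proof (intro allI impI equals0I)
    fix M M' P
    assume MM': "maximalideal M B \<and> maximalideal M' B \<and> M \<noteq> M' \<and> non_comparable (M \<inter> A) (M' \<inter> A)"
      and "P \<in> zariski_closure ?A {M \<inter> A} \<inter> zariski_closure ?A {M' \<inter> A}"
    then have "primeideal P ?A" "M \<inter> A \<subseteq> P" "M' \<inter> A \<subseteq> P"
      using zariski_closure_singleton contraction_prime by (auto simp: Spec_def)
    then show False
      using no_common_prime MM' by blast
  qed
  ultimately show ?thesis by blast
qed

end
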